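(* Let $\phi:\mathbb{R}\to\mathbb{R}$ be differentiable and $f(z)=W_d\phi(W_{d-1}\phi(W_{d-2}\cdots\phi(W_1z)\cdots))$ with $W_i\in\mathbb{R}^{k_i\times k_{i-1}}$, $k_d=k_0$, $z\in\mathbb{R}^{k_0}$. Let $x\in\mathbb{R}^{k_0}$ and run gradient descent with learning rate $\gamma>0$ on $\mathcal{L}(x,f)=\frac12\|x-f(x)\|_2^2$ (jointly over all $W_1,\dots,W_d$). If $W_d^{(0)}=x{a^{(0)}}^T$ and $W_1^{(0)}=b^{(0)}x^T$ with $a^{(0)}\in\mathbb{R}^{k_{d-1}}$, $b^{(0)}\in\mathbb{R}^{k_1}$, then for all time steps $t$ there exist $a^{(t)}\in\mathbb{R}^{k_{d-1}}$, $b^{(t)}\in\mathbb{R}^{k_1}$ with $W_d^{(t)}=x{a^{(t)}}^T$ and $W_1^{(t)}=b^{(t)}x^T$.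
   Context: $\phi$ is applied coordinatewise. Gradient descent updates each $W_i\leftarrow W_i-\gamma\nabla_{W_i}\mathcal{L}$ simultaneously; the intermediate layers $W_2,\dots,W_{d-1}$ are initialized arbitrarily. *)

theory Defs
  imports "HOL-Analysis.Analysis"
begin

text \<open>Vectors are functions nat => real (entries 0..n-1 relevant); a matrix with m columns
is nat => nat => real; the weights of the network are W :: nat => nat => nat => real,
where W i is the matrix W_i of size k i x k (i-1), for i = 1..d.\<close>

definition matvec :: "(nat \<Rightarrow> nat \<Rightarrow> real) \<Rightarrow> nat \<Rightarrow> (nat \<Rightarrow> real) \<Rightarrow> (nat \<Rightarrow> real)" where
  "matvec M m v = (\<lambda>r. \<Sum>c<m. M r c * v c)"

fun pre :: "(real \<Rightarrow> real) \<Rightarrow> (nat \<Rightarrow> nat) \<Rightarrow> (nat \<Rightarrow> nat \<Rightarrow> nat \<Rightarrow> real) \<Rightarrow> (nat \<Rightarrow> real) \<Rightarrow> nat \<Rightarrow> (nat \<Rightarrow> real)" where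
  "pre phi k W z 0 = z"
| "pre phi k W z (Suc 0) = matvec (W 1) (k 0) z"
| "pre phi k W z (Suc (Suc n)) = matvec (W (Suc (Suc n))) (k (Suc n)) (\<lambda>j. phi (pre phi k W z (Suc n) j))"

definition net :: "(real \<Rightarrow> real) \<Rightarrow> (nat \<Rightarrow> nat) \<Rightarrow> nat \<Rightarrow> (nat \<Rightarrow> nat \<Rightarrow> nat \<Rightarrow> real) \<Rightarrow> (nat \<Rightarrow> real) \<Rightarrow> (nat \<Rightarrow> real)" where
  "net phi k d W z = pre phi k W z d"

definition loss :: "(real \<Rightarrow> real) \<Rightarrow> (nat \<Rightarrow> nat) \<Rightarrow> nat \<Rightarrow> (nat \<Rightarrow> real) \<Rightarrow> (nat \<Rightarrow> nat \<Rightarrow> nat \<Rightarrow> real) \<Rightarrow> real" where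
  "loss phi k d x W = (1/2) * (\<Sum>r<k 0. (x r - net phi k d W x r)^2)"

definition grad_entry :: "(real \<Rightarrow> real) \<Rightarrow> (nat \<Rightarrow> nat) \<Rightarrow> nat \<Rightarrow> (nat \<Rightarrow> real) \<Rightarrow> (nat \<Rightarrow> nat \<Rightarrow> nat \<Rightarrow> real) \<Rightarrow> nat \<Rightarrow> nat \<Rightarrow> nat \<Rightarrow> real" where
  "grad_entry phi k d x W i r c =
     deriv (\<lambda>s. loss phi k d x (W(i := (W i)(r := (W i r)(c := s))))) (W i r c)"

definition gd_step :: "(real \<Rightarrow> real) \<Rightarrow> (nat \<Rightarrow> nat) \<Rightarrow> nat \<Rightarrow> (nat \<Rightarrow> real) \<Rightarrow> real \<Rightarrow> (nat \<Rightarrow> nat \<Rightarrow> nat \<Rightarrow> real) \<Rightarrow> (nat \<Rightarrow> nat \<Rightarrow> nat \<Rightarrow> real)" where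
  "gd_step phi k d x \<gamma> W = (\<lambda>i r c. W i r c - \<gamma> * grad_entry phi k d x W i r c)"

end

theory Submission
  imports Defs
begin

text \<open>The gradient of the loss with respect to an entry (W_d)_{rc} of the last layer is
  -(x - f(x))_r times the c-th penultimate activation. If W_d = x a^T then f(x) is a multiple
  of x, hence so is the residual, and the update keeps the form x a'^T. The loss depends on W_1
  only through v = W_1 x, so by the chain rule the gradient with respect to (W_1)_{rc} is
  (dL/dv_r) x_c: every first-layer gradient has the form D x^T, whatever the weights are.\<close>

lemma pre_fun_upd_above: "n < i \<Longrightarrow> pre phi k (W(i := M)) z n = pre phi k W z n"
  by (induction phi k W z n rule: pre.induct) auto

fun upper_layers ::
  "(real \<Rightarrow> real) \<Rightarrow> (nat \<Rightarrow> nat) \<Rightarrow> (nat \<Rightarrow> nat \<Rightarrow> nat \<Rightarrow> real) \<Rightarrow>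
    (nat \<Rightarrow> real) \<Rightarrow> nat \<Rightarrow> (nat \<Rightarrow> real)" where
  "upper_layers phi k W v 0 = v"
| "upper_layers phi k W v (Suc 0) = v"
| "upper_layers phi k W v (Suc (Suc n)) =
     matvec (W (Suc (Suc n))) (k (Suc n)) (\<lambda>j. phi (upper_layers phi k W v (Suc n) j))"

lemma pre_eq_upper_layers:
  "n \<ge> 1 \<Longrightarrow> pre phi k W z n = upper_layers phi k W (matvec (W 1) (k 0) z) n"
  by (induction phi k W z n rule: pre.induct) auto

lemma upper_layers_fun_upd_1: "upper_layers phi k (W(1 := M)) v n = upper_layers phi k W v n"
  by (induction phi k W v n rule: upper_layers.induct) auto

lemma upper_layers_differentiable_coord:
  assumes "\<And>y. phi differentiable (at y)"
  shows "(\<lambda>u. upper_layers phi k W (v(r := u)) n j) differentiable (at u0)"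
  using assms
proof (induction phi k W v n arbitrary: j rule: upper_layers.induct)
  case (1 phi k W v)
  show ?case by (cases "j = r") auto
next
  case (2 phi k W v)
  show ?case by (cases "j = r") auto
next
  case (3 phi k W v n)
  have "(phi \<circ> (\<lambda>u. upper_layers phi k W (v(r := u)) (Suc n) j')) differentiable (at u0)" for j'
    using "3.IH"[OF "3.prems"] "3.prems" by (rule differentiable_chain_at)
  then show ?case
    unfolding upper_layers.simps matvec_def o_def
    by (intro differentiable_sum ballI differentiable_mult differentiable_const) auto
qed

lemma sum_fun_upd_mult:
  fixes f g :: "'a \<Rightarrow> 'b::comm_ring"
  assumes "finite A" "c \<in> A"
  shows "(\<Sum>c'\<in>A. (f(c := s)) c' * g c') = (\<Sum>c'\<in>A. f c' * g c') + (s - f c) * g c"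
proof -
  have "(\<Sum>c'\<in>A. (f(c := s)) c' * g c') = (\<Sum>c'\<in>A. f c' * g c' + (if c' = c then (s - f c) * g c else 0))"
    by (rule sum.cong) (auto simp: left_diff_distrib)
  then show ?thesis
    using assms by (simp add: sum.distrib)
qed

lemma net_eq_matvec_last_layer:
  assumes "d \<ge> 2"
  shows "net phi k d W z = matvec (W d) (k (d - 1)) (\<lambda>j. phi (pre phi k W z (d - 1) j))"
proof -
  obtain n where "d = Suc (Suc n)"
    using assms by (metis add_2_eq_Suc le_Suc_ex)
  then show ?thesis
    by (simp add: net_def)
qed

lemma net_last_layer_rank_one:
  assumes d: "d \<ge> 2" and W_d: "\<forall>c<k (d - 1). W d r c = u r * a c"
  shows "net phi k d W z r = u r * (\<Sum>c<k (d - 1). a c * phi (pre phi k W z (d - 1) c))"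
  using W_d unfolding net_eq_matvec_last_layer[OF d] matvec_def
  by (simp add: sum_distrib_left mult.assoc)

lemma grad_entry_eqI:
  assumes "((\<lambda>s. loss phi k d x (W(i := (W i)(r := (W i r)(c := s))))) has_real_derivative D) (at (W i r c))"
  shows "grad_entry phi k d x W i r c = D"
  using DERIV_imp_deriv[OF assms] unfolding grad_entry_def .

lemma grad_entry_last_layer:
  assumes d: "d \<ge> 2" and r: "r < k 0" and c: "c < k (d - 1)"
  shows "grad_entry phi k d x W d r c =
           - (x r - net phi k d W x r) * phi (pre phi k W x (d - 1) c)"
proof -
  define h where "h j = phi (pre phi k W x (d - 1) j)" for j
  define W' where "W' s = W(d := (W d)(r := (W d r)(c := s)))" for s
  define e where "e r' = x r' - net phi k d W x r'" for r'
  define g where "g r' = (if r' = r then h c else 0)" for r'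
  have net_W': "net phi k d (W' s) x r' = net phi k d W x r' + (s - W d r c) * g r'" for s r'
  proof -
    have "pre phi k (W' s) x (d - 1) = pre phi k W x (d - 1)"
      unfolding W'_def using d by (simp add: pre_fun_upd_above)
    then show ?thesis
      using sum_fun_upd_mult[of "{..<k (d - 1)}" c "W d r" s h] c
      unfolding net_eq_matvec_last_layer[OF d] h_def g_def W'_def by (auto simp: matvec_def)
  qed
  have "(\<lambda>s. loss phi k d x (W' s)) = (\<lambda>s. 1/2 * (\<Sum>r'<k 0. (e r' - (s - W d r c) * g r')^2))"
    unfolding loss_def net_W' e_def by (simp add: algebra_simps)
  then have "((\<lambda>s. loss phi k d x (W' s)) has_real_derivative - (\<Sum>r'<k 0. e r' * g r')) (at (W d r c))"
    by (auto intro!: derivative_eq_intros DERIV_sum simp: sum_negf sum_distrib_left mult_ac)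
  then have "grad_entry phi k d x W d r c = - (\<Sum>r'<k 0. e r' * g r')"
    unfolding W'_def by (rule grad_entry_eqI)
  also have "\<dots> = - e r * h c"
    using r by (simp add: g_def if_distrib cong: if_cong)
  finally show ?thesis
    unfolding e_def h_def .
qed

lemma grad_entry_first_layer_factor:
  assumes phi: "\<And>y. phi differentiable (at y)" and d: "d \<ge> 1"
  shows "\<exists>D. \<forall>c<k 0. grad_entry phi k d x W 1 r c = D * x c"
proof -
  define v where "v = matvec (W 1) (k 0) x"
  define G where "G u = 1/2 * (\<Sum>r'<k 0. (x r' - upper_layers phi k W (v(r := u)) d r')^2)" for u
  have "G differentiable (at (v r))"
    unfolding G_def using phi
    by (intro differentiable_sum differentiable_mult differentiable_power differentiable_diff
          differentiable_const upper_layers_differentiable_coord ballI) auto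
  then obtain D where D: "(G has_real_derivative D) (at (v r))"
    using DERIV_deriv_iff_real_differentiable by blast
  have "grad_entry phi k d x W 1 r c = D * x c" if c: "c < k 0" for c
  proof -
    define W' where "W' s = W(1 := (W 1)(r := (W 1 r)(c := s)))" for s
    have first_output: "matvec (W' s 1) (k 0) x = v(r := v r + (s - W 1 r c) * x c)" for s
      using sum_fun_upd_mult[of "{..<k 0}" c "W 1 r" s x] c
      unfolding W'_def v_def matvec_def by auto
    have "net phi k d (W' s) x = upper_layers phi k W (v(r := v r + (s - W 1 r c) * x c)) d" for s
      unfolding net_def pre_eq_upper_layers[OF d] first_output
      unfolding W'_def upper_layers_fun_upd_1 ..
    then have "loss phi k d x (W' s) = G (v r + (s - W 1 r c) * x c)" for s
      unfolding loss_def G_def by simp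
    moreover have "((\<lambda>s. G (v r + (s - W 1 r c) * x c)) has_real_derivative D * x c) (at (W 1 r c))"
      using D by (auto intro!: derivative_eq_intros DERIV_chain2[where f = G])
    ultimately show ?thesis
      unfolding W'_def by (intro grad_entry_eqI) simp
  qed
  then show ?thesis
    by blast
qed

lemma gd_step_last_layer_rank_one:
  assumes d: "d \<ge> 2" and kd: "k d = k 0"
    and W_d: "\<forall>r<k d. \<forall>c<k (d - 1). W d r c = x r * a c"
  shows "\<exists>a'. \<forall>r<k d. \<forall>c<k (d - 1). gd_step phi k d x \<gamma> W d r c = x r * a' c"
proof -
  define h where "h j = phi (pre phi k W x (d - 1) j)" for j
  define S where "S = (\<Sum>c<k (d - 1). a c * h c)"
  define a' where "a' c = a c + \<gamma> * (1 - S) * h c" for c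
  have "gd_step phi k d x \<gamma> W d r c = x r * a' c" if r: "r < k d" and c: "c < k (d - 1)" for r c
  proof -
    have "net phi k d W x r = x r * S"
      using net_last_layer_rank_one[OF d] W_d r unfolding S_def h_def by blast
    then have grad: "grad_entry phi k d x W d r c = - (x r - x r * S) * h c"
      using grad_entry_last_layer[OF d, of r k c phi x W] r c kd unfolding h_def by simp
    show ?thesis
      using W_d r c unfolding gd_step_def grad a'_def by (simp add: algebra_simps)
  qed
  then show ?thesis
    by blast
qed

lemma gd_step_first_layer_rank_one:
  assumes phi: "\<And>y. phi differentiable (at y)" and d: "d \<ge> 1"
    and W_1: "\<forall>r<k 1. \<forall>c<k 0. W 1 r c = b r * x c"
  shows "\<exists>b'. \<forall>r<k 1. \<forall>c<k 0. gd_step phi k d x \<gamma> W 1 r c = b' r * x c"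
proof -
  obtain D where D: "\<And>r c. c < k 0 \<Longrightarrow> grad_entry phi k d x W 1 r c = D r * x c"
    using grad_entry_first_layer_factor[OF phi d] by metis
  define b' where "b' r = b r - \<gamma> * D r" for r
  have "\<forall>r<k 1. \<forall>c<k 0. gd_step phi k d x \<gamma> W 1 r c = b' r * x c"
    using W_1 D unfolding gd_step_def b'_def by (simp add: algebra_simps)
  then show ?thesis
    by blast
qed

theorem mainTheorem9:
  fixes phi :: "real \<Rightarrow> real" and k :: "nat \<Rightarrow> nat" and d :: nat
    and x :: "nat \<Rightarrow> real" and \<gamma> :: real
    and Wt :: "nat \<Rightarrow> nat \<Rightarrow> nat \<Rightarrow> nat \<Rightarrow> real"
    and a0 b0 :: "nat \<Rightarrow> real"
  assumes diff: "\<And>y. phi differentiable (at y)"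
    and d2: "d \<ge> 2"
    and kd: "k d = k 0"
    and lr: "\<gamma> > 0"
    and init_d: "\<forall>r<k d. \<forall>c<k (d - 1). Wt 0 d r c = x r * a0 c"
    and init_1: "\<forall>r<k 1. \<forall>c<k 0. Wt 0 1 r c = b0 r * x c"
    and gd: "\<And>t. Wt (Suc t) = gd_step phi k d x \<gamma> (Wt t)"
  shows "\<forall>t. \<exists>a b :: nat \<Rightarrow> real.
           (\<forall>r<k d. \<forall>c<k (d - 1). Wt t d r c = x r * a c) \<and>
           (\<forall>r<k 1. \<forall>c<k 0. Wt t 1 r c = b r * x c)"
proof
  fix t
  show "\<exists>a b :: nat \<Rightarrow> real.
          (\<forall>r<k d. \<forall>c<k (d - 1). Wt t d r c = x r * a c) \<and>
          (\<forall>r<k 1. \<forall>c<k 0. Wt t 1 r c = b r * x c)"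
  proof (induction t)
    case 0
    show ?case
      using init_d init_1 by blast
  next
    case (Suc t)
    then obtain a b where a: "\<forall>r<k d. \<forall>c<k (d - 1). Wt t d r c = x r * a c"
      and b: "\<forall>r<k 1. \<forall>c<k 0. Wt t 1 r c = b r * x c"
      by blast
    have d1: "d \<ge> 1"
      using d2 by simp
    obtain a' where "\<forall>r<k d. \<forall>c<k (d - 1). Wt (Suc t) d r c = x r * a' c"
      using gd_step_last_layer_rank_one[where W = "Wt t", OF d2 kd a] unfolding gd by blast
    moreover obtain b' where "\<forall>r<k 1. \<forall>c<k 0. Wt (Suc t) 1 r c = b' r * x c"
      using gd_step_first_layer_rank_one[where W = "Wt t", OF diff d1 b] unfolding gd by blast
    ultimately show ?case
      by blast
  qed
qed

end
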